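(* Let $0<R_{\min}<R_{\max}$, $0<\varepsilon<1$, fix a center $c$, and define $r_i=R_{\min}(1+\frac{e\varepsilon}{4})^i$ for $i=0,1,\dots,s$, where $s$ is the least integer with $r_s\ge R_{\max}$. Then $s\le\lceil\frac{8}{e\varepsilon}\log\frac{R_{\max}}{R_{\min}}\rceil$, and for every $r\in[R_{\min},R_{\max}]$ there is an index $i$ with $|\Phi(K_{c,r_i})-\Phi(K_{c,r})|\le\varepsilon$; in particular $s=O(\frac1\varepsilon\log\frac{R_{\max}}{R_{\min}})$ bandwidths suffice.
   Context: $B\subset\mathbb{R}^d$ finite nonempty, $m:B\to\{0,1\}$, $M=\{x\in B:m(x)=1\}$. $K_{c,r}(x)=\exp(-\|x-c\|^2/r^2)$. For $p,q\in[0,1]$ and $K:B\to[0,1]$: $g(x)=pK(x)+q(1-K(x))$, $\ell(p,q,K)=\frac{1}{|B|}\big(\sum_{x\in M}\log g(x)+\sum_{x\in B\setminus M}\log(1-g(x))\big)$, $\ell_0(q)=\frac1{|B|}(|M|\log q+|B\setminus M|\log(1-q))$, $\Phi(K)=\max_{p,q\in[0,1]}\ell(p,q,K)-\max_q\ell_0(q)$. Standing assumption: for each bandwidth the maximizer $(p^*,q^* )$ is interior to $(0,1)^2$ with finite value. *)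

theory Defs
  imports "HOL-Analysis.Analysis"
begin

definition gauss_kernel :: "'a::euclidean_space \<Rightarrow> real \<Rightarrow> 'a \<Rightarrow> real" where
  "gauss_kernel c r x = exp (- ((norm (x - c)) ^ 2) / (r ^ 2))"

definition marked :: "'a set \<Rightarrow> ('a \<Rightarrow> nat) \<Rightarrow> 'a set" where
  "marked B m = {x \<in> B. m x = 1}"

definition gmix :: "real \<Rightarrow> real \<Rightarrow> ('a \<Rightarrow> real) \<Rightarrow> 'a \<Rightarrow> real" where
  "gmix p q K x = p * K x + q * (1 - K x)"

definition loglik :: "'a set \<Rightarrow> ('a \<Rightarrow> nat) \<Rightarrow> real \<Rightarrow> real \<Rightarrow> ('a \<Rightarrow> real) \<Rightarrow> real" where
  "loglik B m p q K =
     (1 / real (card B)) *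
     ((\<Sum>x\<in>marked B m. ln (gmix p q K x)) + (\<Sum>x\<in>B - marked B m. ln (1 - gmix p q K x)))"

definition loglik0 :: "'a set \<Rightarrow> ('a \<Rightarrow> nat) \<Rightarrow> real \<Rightarrow> real" where
  "loglik0 B m q =
     (1 / real (card B)) *
     (real (card (marked B m)) * ln q + real (card (B - marked B m)) * ln (1 - q))"

text \<open>The maxima over the closed squares are taken as suprema over the open squares
  (Isabelle's ln 0 = 0 would otherwise distort boundary values; mathematically,
  with log 0 = -infinity, the sup over the open square equals the max over the closed one).\<close>
definition Phi :: "'a set \<Rightarrow> ('a \<Rightarrow> nat) \<Rightarrow> ('a \<Rightarrow> real) \<Rightarrow> real" where
  "Phi B m K =
     (SUP pq \<in> {0<..<1::real} \<times> {0<..<1::real}. loglik B m (fst pq) (snd pq) K)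
     - (SUP q \<in> {0<..<1::real}. loglik0 B m q)"

end

theory Submission
  imports Defs
begin

text \<open>Each log-likelihood term has the form ln (a + b exp (-D / r^2)) with a > 0 and a + b > 0.
  Its derivative in r is at least -2/r, so for fixed (p, q) enlarging the bandwidth from t to s
  lowers the likelihood by at most 2 ln (s / t) \<le> s^2/t^2 - 1. Conversely, at a maximiser for
  bandwidth s the first-order condition in q balances the marked against the unmarked points, which
  bounds the total derivative on [t, s] by 2 s^2 / r^3 and hence the loss when shrinking the
  bandwidth from s to t by s^2/t^2 - 1. Comparing the two maximisers gives
  |Phi(K_t) - Phi(K_s)| \<le> s^2/t^2 - 1.
  Consecutive radii of the geometric grid have squared ratio 1 + e \<epsilon>/4 \<le> 1 + \<epsilon>, so every
  r in [Rmin, Rmax] has a grid radius within this squared ratio, and since ln (1 + a) \<ge> a/2 the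
  grid passes Rmax after at most \<lceil>2/a ln (Rmax/Rmin)\<rceil> steps.\<close>

lemma mult_exp_neg_le: "0 \<le> (u::real) \<Longrightarrow> u * exp (- u) \<le> 1 - exp (- u)"
proof -
  assume "0 \<le> u"
  have "(1 + u) * exp (- u) \<le> exp u * exp (- u)"
    by (intro mult_right_mono exp_ge_add_one_self) auto
  then show ?thesis
    by (simp add: algebra_simps exp_minus)
qed

lemma convex_comb_pos:
  fixes a b k :: real
  assumes "0 < a" "0 < a + b" "0 \<le> k" "k \<le> 1"
  shows "0 < a + b * k"
proof -
  have "a + b * k = a * (1 - k) + (a + b) * k"
    by (simp add: algebra_simps)
  moreover have "0 < a * (1 - k) + (a + b) * k"
    using assms by (cases "k = 0") (auto intro: add_nonneg_pos)
  ultimately show ?thesis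
    by simp
qed

lemma divide_linear_mono:
  fixes a b k k' :: real
  assumes "0 < a" "0 \<le> b" "0 \<le> k" "k \<le> k'"
  shows "k / (a + b * k) \<le> k' / (a + b * k')"
proof -
  have "0 < a + b * k" "0 < a + b * k'"
    using assms by (auto intro: add_pos_nonneg)
  moreover have "k * (a + b * k') \<le> k' * (a + b * k)"
    using assms by (simp add: algebra_simps mult_left_mono)
  ultimately show ?thesis
    by (simp add: divide_simps)
qed

context
  fixes a b D :: real
  assumes a_pos: "0 < a" and ab_pos: "0 < a + b" and D_nonneg: "0 \<le> D"
begin

lemma mix_exp_pos: "0 < a + b * exp (- D / r^2)"
  using D_nonneg by (intro convex_comb_pos a_pos ab_pos) (auto simp: divide_nonneg_nonneg)

lemma has_real_derivative_ln_mix_exp: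
  assumes "r \<noteq> 0"
  shows "((\<lambda>r. ln (a + b * exp (- D / r^2))) has_real_derivative
           b * exp (- D / r^2) * (2 * D / r^3) / (a + b * exp (- D / r^2))) (at r)"
  using assms mix_exp_pos[of r]
  by (auto intro!: derivative_eq_intros simp: field_simps power2_eq_square power3_eq_cube)

lemma deriv_ln_mix_exp_ge:
  assumes "0 < r"
  shows "- 2 / r \<le> b * exp (- D / r^2) * (2 * D / r^3) / (a + b * exp (- D / r^2))"
proof -
  define k where "k = exp (- D / r^2)"
  define u where "u = D / r^2"
  have k: "k = exp (- u)" and u: "0 \<le> u"
    using D_nonneg by (simp_all add: k_def u_def)
  have pos: "0 < a + b * k"
    unfolding k_def by (rule mix_exp_pos)
  \<comment> \<open>For b < 0 this uses u e^(-u) \<le> 1 - e^(-u) and a > -b.\<close>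
  have "- (a + b * k) \<le> b * k * u"
  proof (cases "0 \<le> b")
    case True
    then have "0 \<le> b * k * u"
      using u by (simp add: k)
    then show ?thesis
      using pos by linarith
  next
    case False
    have "- b * (k * u) \<le> - b * (1 - k)"
      using False mult_exp_neg_le[OF u] by (intro mult_left_mono) (auto simp: k mult.commute)
    then show ?thesis
      using ab_pos by (simp add: algebra_simps)
  qed
  then have "- 1 \<le> b * k * u / (a + b * k)"
    using pos by (simp add: field_simps)
  then have "2 / r * - 1 \<le> 2 / r * (b * k * u / (a + b * k))"
    using assms by (intro mult_left_mono) auto
  also have "\<dots> = b * k * (2 * D / r^3) / (a + b * k)"
    using assms by (simp add: u_def field_simps power3_eq_cube power2_eq_square)
  finally show ?thesis
    by (simp add: k_def)
qed

lemma deriv_ln_mix_exp_le: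
  assumes "0 \<le> b" "0 < r" "r \<le> s"
  shows "b * exp (- D / r^2) * (2 * D / r^3) / (a + b * exp (- D / r^2))
           \<le> 2 * s^2 / r^3 * (b * (1 - exp (- D / s^2)) / (a + b * exp (- D / s^2)))"
proof -
  define kr where "kr = exp (- D / r^2)"
  define ks where "ks = exp (- D / s^2)"
  define u where "u = D / s^2"
  have u: "0 \<le> u" "ks = exp (- u)"
    using D_nonneg by (simp_all add: u_def ks_def)
  have ks_pos: "0 < a + b * ks"
    unfolding ks_def by (rule mix_exp_pos)
  have "D / s^2 \<le> D / r^2"
    using assms D_nonneg by (intro divide_left_mono power_mono mult_pos_pos) auto
  then have "kr \<le> ks"
    by (simp add: kr_def ks_def)
  have "b * kr * (2 * D / r^3) / (a + b * kr) = 2 * s^2 / r^3 * (b * u * (kr / (a + b * kr)))"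
    using assms by (simp add: u_def)
  \<comment> \<open>The kernel grows with the bandwidth, so the ratio k / (a + b k) is largest at r = s.\<close>
  also have "\<dots> \<le> 2 * s^2 / r^3 * (b * u * (ks / (a + b * ks)))"
    using assms u \<open>kr \<le> ks\<close> a_pos
    by (intro mult_left_mono divide_linear_mono) (auto simp: kr_def)
  also have "\<dots> \<le> 2 * s^2 / r^3 * (b * (1 - ks) / (a + b * ks))"
  proof -
    have "b * (u * ks) \<le> b * (1 - ks)"
      using mult_exp_neg_le[OF u(1)] u(2) assms(1) by (intro mult_left_mono) auto
    then have "b * u * (ks / (a + b * ks)) \<le> b * (1 - ks) / (a + b * ks)"
      using ks_pos by (simp add: divide_right_mono)
    then show ?thesis
      using assms by (intro mult_left_mono) auto
  qed
  finally show ?thesis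
    by (simp add: kr_def ks_def)
qed

lemma ln_mix_exp_lower:
  assumes "0 < t" "t \<le> s"
  shows "ln (a + b * exp (- D / t^2)) \<le> ln (a + b * exp (- D / s^2)) + 2 * ln (s / t)"
proof -
  have "ln (a + b * exp (- D / t^2)) + 2 * ln t \<le> ln (a + b * exp (- D / s^2)) + 2 * ln s"
  proof (rule DERIV_nonneg_imp_nondecreasing[OF \<open>t \<le> s\<close>])
    fix r assume "t \<le> r" "r \<le> s"
    then have r: "0 < r"
      using \<open>0 < t\<close> by linarith
    have "((\<lambda>r. ln (a + b * exp (- D / r^2)) + 2 * ln r) has_real_derivative
        b * exp (- D / r^2) * (2 * D / r^3) / (a + b * exp (- D / r^2)) + 2 * (1 / r)) (at r)"
      using r by (intro DERIV_add DERIV_cmult has_real_derivative_ln_mix_exp DERIV_ln_divide) auto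
    moreover have "0 \<le> b * exp (- D / r^2) * (2 * D / r^3) / (a + b * exp (- D / r^2)) + 2 * (1 / r)"
      using deriv_ln_mix_exp_ge[OF r] by simp
    ultimately show "\<exists>y. ((\<lambda>r. ln (a + b * exp (- D / r^2)) + 2 * ln r) has_real_derivative y) (at r) \<and> 0 \<le> y"
      by blast
  qed
  then show ?thesis
    using assms by (simp add: ln_div)
qed

lemma ln_mix_exp_upper:
  assumes "0 \<le> b" "0 < t" "t \<le> s"
  shows "ln (a + b * exp (- D / s^2)) \<le> ln (a + b * exp (- D / t^2))
           + (s^2 / t^2 - 1) * (b * (1 - exp (- D / s^2)) / (a + b * exp (- D / s^2)))"
proof -
  define C where "C = b * (1 - exp (- D / s^2)) / (a + b * exp (- D / s^2))"
  have "ln (a + b * exp (- D / s^2)) + C * (s^2 / s^2) \<le> ln (a + b * exp (- D / t^2)) + C * (s^2 / t^2)"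
  proof (rule DERIV_nonpos_imp_nonincreasing[OF \<open>t \<le> s\<close>])
    fix r assume "t \<le> r" "r \<le> s"
    then have r: "0 < r"
      using \<open>0 < t\<close> by linarith
    have "((\<lambda>r. ln (a + b * exp (- D / r^2)) + C * (s^2 / r^2)) has_real_derivative
        b * exp (- D / r^2) * (2 * D / r^3) / (a + b * exp (- D / r^2)) - C * (2 * s^2 / r^3)) (at r)"
      using r mix_exp_pos[of r]
      by (auto intro!: derivative_eq_intros has_real_derivative_ln_mix_exp
               simp: field_simps power2_eq_square power3_eq_cube)
    moreover have "b * exp (- D / r^2) * (2 * D / r^3) / (a + b * exp (- D / r^2)) - C * (2 * s^2 / r^3) \<le> 0"
      using deriv_ln_mix_exp_le[OF \<open>0 \<le> b\<close> r \<open>r \<le> s\<close>] by (simp add: C_def algebra_simps)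
    ultimately show "\<exists>y. ((\<lambda>r. ln (a + b * exp (- D / r^2)) + C * (s^2 / r^2)) has_real_derivative y) (at r) \<and> y \<le> 0"
      by blast
  qed
  moreover have "s^2 / s^2 = 1"
    using assms by simp
  ultimately show ?thesis
    unfolding C_def[symmetric] by (simp add: algebra_simps)
qed
end

lemma gmix_gauss_kernel:
  "gmix p q (gauss_kernel c r) x = q + (p - q) * exp (- ((norm (x - c))^2) / r^2)"
  by (simp add: gmix_def gauss_kernel_def algebra_simps)

lemma one_minus_gmix: "1 - gmix p q K x = gmix (1 - p) (1 - q) K x"
  by (simp add: gmix_def algebra_simps)

lemma gmix_pos:
  assumes "0 < p" "0 < q" "0 \<le> K x" "K x \<le> 1"
  shows "0 < gmix p q K x"
  using convex_comb_pos[of q "p - q" "K x"] assms by (simp add: gmix_def algebra_simps)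

lemma gauss_kernel_nonneg: "0 \<le> gauss_kernel c r x"
  by (simp add: gauss_kernel_def)

lemma gauss_kernel_le_one: "gauss_kernel c r x \<le> 1"
  by (simp add: gauss_kernel_def divide_nonneg_nonneg)

lemma gauss_kernel_mono:
  assumes "0 < t" "t \<le> s"
  shows "gauss_kernel c t x \<le> gauss_kernel c s x"
  using assms by (simp add: gauss_kernel_def divide_left_mono power_mono)

lemma ln_gmix_gauss_lower:
  assumes "0 < p" "0 < q" "0 < t" "t \<le> s"
  shows "ln (gmix p q (gauss_kernel c t) x) \<le> ln (gmix p q (gauss_kernel c s) x) + 2 * ln (s / t)"
  unfolding gmix_gauss_kernel using assms by (intro ln_mix_exp_lower) auto

lemma ln_gmix_gauss_upper:
  assumes "0 < q" "q \<le> p" "0 < t" "t \<le> s"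
  shows "ln (gmix p q (gauss_kernel c s) x) \<le> ln (gmix p q (gauss_kernel c t) x)
           + (s^2 / t^2 - 1) * ((p - q) * (1 - gauss_kernel c s x) / gmix p q (gauss_kernel c s) x)"
  using ln_mix_exp_upper[where a = q and b = "p - q" and D = "(norm (x - c))^2"] assms
  by (simp add: gmix_gauss_kernel gauss_kernel_def)

lemma gmix_gauss_antimono:
  assumes "p \<le> q" "0 < t" "t \<le> s"
  shows "gmix p q (gauss_kernel c s) x \<le> gmix p q (gauss_kernel c t) x"
  using mult_left_mono_neg[OF gauss_kernel_mono[OF assms(2,3)], of "p - q" c x] assms(1)
  by (simp add: gmix_def algebra_simps)

definition loglik_sum :: "'a set \<Rightarrow> 'a set \<Rightarrow> real \<Rightarrow> real \<Rightarrow> ('a \<Rightarrow> real) \<Rightarrow> real" where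
  "loglik_sum M U p q K = (\<Sum>x\<in>M. ln (gmix p q K x)) + (\<Sum>x\<in>U. ln (1 - gmix p q K x))"

lemma loglik_eq_loglik_sum:
  "loglik B m p q K = loglik_sum (marked B m) (B - marked B m) p q K / real (card B)"
  by (simp add: loglik_def loglik_sum_def)

lemma loglik_sum_swap: "loglik_sum M U p q K = loglik_sum U M (1 - p) (1 - q) K"
  by (simp add: loglik_sum_def one_minus_gmix)

lemma loglik_sum_gauss_lower:
  assumes "0 < p" "p < 1" "0 < q" "q < 1" "0 < t" "t \<le> s"
  shows "loglik_sum M U p q (gauss_kernel c t)
           \<le> loglik_sum M U p q (gauss_kernel c s) + (card M + card U) * (2 * ln (s / t))"
proof -
  have "(\<Sum>x\<in>M. ln (gmix p q (gauss_kernel c t) x))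
          \<le> (\<Sum>x\<in>M. ln (gmix p q (gauss_kernel c s) x) + 2 * ln (s / t))"
    using assms by (intro sum_mono ln_gmix_gauss_lower) auto
  moreover have "(\<Sum>x\<in>U. ln (1 - gmix p q (gauss_kernel c t) x))
          \<le> (\<Sum>x\<in>U. ln (1 - gmix p q (gauss_kernel c s) x) + 2 * ln (s / t))"
    unfolding one_minus_gmix using assms by (intro sum_mono ln_gmix_gauss_lower) auto
  ultimately show ?thesis
    unfolding loglik_sum_def by (simp add: sum.distrib algebra_simps)
qed

lemma loglik_sum_stationary_q:
  assumes "0 < p" "p < 1" "0 < q" "q < 1" and K: "\<And>x. 0 \<le> K x \<and> K x \<le> 1"
    and max: "\<forall>q'\<in>{0<..<1}. loglik_sum M U p q' K \<le> loglik_sum M U p q K"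
  shows "(\<Sum>x\<in>M. (1 - K x) / gmix p q K x) = (\<Sum>x\<in>U. (1 - K x) / (1 - gmix p q K x))"
proof -
  have "0 < gmix p q K x" "0 < 1 - gmix p q K x" for x
    unfolding one_minus_gmix using assms K[of x] by (auto intro: gmix_pos)
  then have "((\<lambda>q. loglik_sum M U p q K) has_real_derivative
      (\<Sum>x\<in>M. (1 - K x) / gmix p q K x) + (\<Sum>x\<in>U. - (1 - K x) / (1 - gmix p q K x))) (at q)"
    unfolding loglik_sum_def
    by (intro DERIV_add DERIV_sum DERIV_ln_divide)
       (auto intro!: derivative_eq_intros simp: gmix_def)
  then have "(\<Sum>x\<in>M. (1 - K x) / gmix p q K x) + (\<Sum>x\<in>U. - (1 - K x) / (1 - gmix p q K x)) = 0"
    by (rule DERIV_local_max[where d = "min q (1 - q)"])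
       (use assms in \<open>auto simp: abs_if split: if_splits\<close>)
  then show ?thesis
    unfolding minus_divide_left[symmetric] sum_negf by simp
qed

lemma loglik_sum_gauss_upper_of_le:
  assumes "0 < q" "q \<le> p" "p < 1" "0 < t" "t \<le> s"
    and max: "\<forall>q'\<in>{0<..<1}. loglik_sum M U p q' (gauss_kernel c s) \<le> loglik_sum M U p q (gauss_kernel c s)"
  shows "loglik_sum M U p q (gauss_kernel c s)
           \<le> loglik_sum M U p q (gauss_kernel c t) + (s^2 / t^2 - 1) * card U"
proof -
  let ?k = "gauss_kernel c s"
  let ?gs = "gmix p q (gauss_kernel c s)" and ?gt = "gmix p q (gauss_kernel c t)"
  define \<delta> where "\<delta> = s^2 / t^2 - 1"
  have \<delta>: "0 \<le> \<delta>"
    using assms by (simp add: \<delta>_def power_mono)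
  have k: "0 \<le> gauss_kernel c r x \<and> gauss_kernel c r x \<le> 1" for r x
    by (simp add: gauss_kernel_nonneg gauss_kernel_le_one)
  have one_minus_gs_pos: "0 < 1 - ?gs x" for x
    unfolding one_minus_gmix using assms k by (intro gmix_pos) auto
  have foc: "(\<Sum>x\<in>M. (1 - ?k x) / ?gs x) = (\<Sum>x\<in>U. (1 - ?k x) / (1 - ?gs x))"
    using assms k by (intro loglik_sum_stationary_q max) auto
  have marked: "(\<Sum>x\<in>M. ln (?gs x)) \<le> (\<Sum>x\<in>M. ln (?gt x)) + \<delta> * ((p - q) * (\<Sum>x\<in>M. (1 - ?k x) / ?gs x))"
  proof -
    have "(\<Sum>x\<in>M. ln (?gs x)) \<le> (\<Sum>x\<in>M. ln (?gt x) + \<delta> * ((p - q) * (1 - ?k x) / ?gs x))"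
      unfolding \<delta>_def using assms by (intro sum_mono ln_gmix_gauss_upper) auto
    then show ?thesis
      by (simp add: sum.distrib sum_distrib_left mult.assoc)
  qed
  \<comment> \<open>The first-order condition in q moves these error terms onto the unmarked points,
    where each of them is at most one.\<close>
  have "(p - q) * (1 - ?k x) / (1 - ?gs x) \<le> 1" for x
    using one_minus_gs_pos[of x] k[of s x] assms by (simp add: gmix_def algebra_simps)
  then have "(p - q) * (\<Sum>x\<in>U. (1 - ?k x) / (1 - ?gs x)) \<le> (\<Sum>x\<in>U. 1)"
    unfolding sum_distrib_left by (intro sum_mono) simp
  then have weights: "\<delta> * ((p - q) * (\<Sum>x\<in>M. (1 - ?k x) / ?gs x)) \<le> \<delta> * card U"
    unfolding foc using \<delta> by (intro mult_left_mono) auto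
  have "ln (1 - ?gs x) \<le> ln (1 - ?gt x)" for x
    unfolding one_minus_gmix using assms k
    by (subst ln_le_cancel_iff) (auto intro: gmix_pos gmix_gauss_antimono)
  then have unmarked: "(\<Sum>x\<in>U. ln (1 - ?gs x)) \<le> (\<Sum>x\<in>U. ln (1 - ?gt x))"
    by (rule sum_mono)
  show ?thesis
    using marked weights unmarked unfolding loglik_sum_def \<delta>_def by linarith
qed

lemma loglik_sum_gauss_upper:
  assumes "0 < p" "p < 1" "0 < q" "q < 1" "0 < t" "t \<le> s"
    and max: "\<forall>q'\<in>{0<..<1}. loglik_sum M U p q' (gauss_kernel c s) \<le> loglik_sum M U p q (gauss_kernel c s)"
  shows "loglik_sum M U p q (gauss_kernel c s)
           \<le> loglik_sum M U p q (gauss_kernel c t) + (s^2 / t^2 - 1) * (card M + card U)"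
proof -
  have \<delta>: "0 \<le> s^2 / t^2 - 1"
    using assms by (simp add: power_mono)
  show ?thesis
  proof (cases "q \<le> p")
    case True
    then have "loglik_sum M U p q (gauss_kernel c s)
        \<le> loglik_sum M U p q (gauss_kernel c t) + (s^2 / t^2 - 1) * card U"
      using assms by (intro loglik_sum_gauss_upper_of_le) auto
    moreover have "(s^2 / t^2 - 1) * card U \<le> (s^2 / t^2 - 1) * (card M + card U)"
      using \<delta> by (intro mult_left_mono) auto
    ultimately show ?thesis
      by linarith
  next
    case False
    \<comment> \<open>Exchanging the marked and unmarked points together with p, q and 1 - p, 1 - q
      reduces to the case q \<le> p.\<close>
    have "\<forall>q'\<in>{0<..<1}. loglik_sum U M (1 - p) q' (gauss_kernel c s)
        \<le> loglik_sum U M (1 - p) (1 - q) (gauss_kernel c s)"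
    proof
      fix q' :: real assume "q' \<in> {0<..<1}"
      then have "loglik_sum M U p (1 - q') (gauss_kernel c s) \<le> loglik_sum M U p q (gauss_kernel c s)"
        using max by auto
      then show "loglik_sum U M (1 - p) q' (gauss_kernel c s) \<le> loglik_sum U M (1 - p) (1 - q) (gauss_kernel c s)"
        by (simp only: loglik_sum_swap[of U M]) simp
    qed
    then have "loglik_sum U M (1 - p) (1 - q) (gauss_kernel c s)
        \<le> loglik_sum U M (1 - p) (1 - q) (gauss_kernel c t) + (s^2 / t^2 - 1) * card M"
      using assms False by (intro loglik_sum_gauss_upper_of_le) auto
    moreover have "(s^2 / t^2 - 1) * card M \<le> (s^2 / t^2 - 1) * (card M + card U)"
      using \<delta> by (intro mult_left_mono) auto
    ultimately show ?thesis
      unfolding loglik_sum_swap[of U M] by simp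
  qed
qed

lemma card_marked_add_card_unmarked:
  assumes "finite B"
  shows "card (marked B m) + card (B - marked B m) = card B"
proof -
  have "marked B m \<subseteq> B"
    by (auto simp: marked_def)
  then show ?thesis
    using assms by (metis card_Diff_subset card_mono finite_subset le_add_diff_inverse)
qed

lemma loglik_gauss_lower:
  assumes "finite B" "B \<noteq> {}" "0 < p" "p < 1" "0 < q" "q < 1" "0 < t" "t \<le> s"
  shows "loglik B m p q (gauss_kernel c t) \<le> loglik B m p q (gauss_kernel c s) + 2 * ln (s / t)"
proof -
  have n: "0 < real (card B)"
    using assms by (simp add: card_gt_0_iff)
  have "loglik_sum (marked B m) (B - marked B m) p q (gauss_kernel c t)
      \<le> loglik_sum (marked B m) (B - marked B m) p q (gauss_kernel c s) + card B * (2 * ln (s / t))"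
    using loglik_sum_gauss_lower[OF assms(3-8)] card_marked_add_card_unmarked[OF assms(1)]
    by (metis of_nat_add)
  then show ?thesis
    unfolding loglik_eq_loglik_sum using n by (simp add: field_simps)
qed

lemma loglik_gauss_upper:
  assumes "finite B" "B \<noteq> {}" "0 < p" "p < 1" "0 < q" "q < 1" "0 < t" "t \<le> s"
    and max: "\<forall>q'\<in>{0<..<1}. loglik B m p q' (gauss_kernel c s) \<le> loglik B m p q (gauss_kernel c s)"
  shows "loglik B m p q (gauss_kernel c s) \<le> loglik B m p q (gauss_kernel c t) + (s^2 / t^2 - 1)"
proof -
  have n: "0 < real (card B)"
    using assms by (simp add: card_gt_0_iff)
  have "\<forall>q'\<in>{0<..<1}. loglik_sum (marked B m) (B - marked B m) p q' (gauss_kernel c s)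
      \<le> loglik_sum (marked B m) (B - marked B m) p q (gauss_kernel c s)"
    using max n by (simp add: loglik_eq_loglik_sum divide_le_cancel)
  then have "loglik_sum (marked B m) (B - marked B m) p q (gauss_kernel c s)
      \<le> loglik_sum (marked B m) (B - marked B m) p q (gauss_kernel c t) + (s^2 / t^2 - 1) * card B"
    using loglik_sum_gauss_upper[OF assms(3-8)] card_marked_add_card_unmarked[OF assms(1)]
    by metis
  then show ?thesis
    unfolding loglik_eq_loglik_sum using n by (simp add: field_simps)
qed

definition is_mle :: "'a set \<Rightarrow> ('a \<Rightarrow> nat) \<Rightarrow> ('a \<Rightarrow> real) \<Rightarrow> real \<Rightarrow> real \<Rightarrow> bool" where
  "is_mle B m K p q \<longleftrightarrow> p \<in> {0<..<1} \<and> q \<in> {0<..<1} \<and>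
     (\<forall>p'\<in>{0<..<1}. \<forall>q'\<in>{0<..<1}. loglik B m p' q' K \<le> loglik B m p q K)"

lemma Phi_eq_loglik_mle:
  assumes "is_mle B m K p q"
  shows "Phi B m K = loglik B m p q K - (SUP q \<in> {0<..<1::real}. loglik0 B m q)"
proof -
  have "(SUP pq \<in> {0<..<1::real} \<times> {0<..<1::real}. loglik B m (fst pq) (snd pq) K) = loglik B m p q K"
    using assms unfolding is_mle_def
    by (intro cSup_eq_maximum) (auto intro!: image_eqI[where x = "(p, q)"])
  then show ?thesis
    unfolding Phi_def by simp
qed

lemma Phi_gauss_diff_le:
  assumes "finite B" "B \<noteq> {}"
    and mle_t: "is_mle B m (gauss_kernel c t) p1 q1" and mle_s: "is_mle B m (gauss_kernel c s) p2 q2"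
    and "0 < t" "t \<le> s"
  shows "\<bar>Phi B m (gauss_kernel c t) - Phi B m (gauss_kernel c s)\<bar> \<le> s^2 / t^2 - 1"
proof -
  have "2 * ln (s / t) = ln ((s / t)^2)"
    using assms by (simp add: ln_realpow)
  also have "\<dots> \<le> s^2 / t^2 - 1"
    using assms by (simp add: ln_le_minus_one power_divide)
  finally have ln_le: "2 * ln (s / t) \<le> s^2 / t^2 - 1" .
  have "loglik B m p1 q1 (gauss_kernel c t) \<le> loglik B m p1 q1 (gauss_kernel c s) + 2 * ln (s / t)"
    using assms mle_t unfolding is_mle_def by (intro loglik_gauss_lower) auto
  moreover have "loglik B m p2 q2 (gauss_kernel c s) \<le> loglik B m p2 q2 (gauss_kernel c t) + (s^2 / t^2 - 1)"
    using assms mle_s unfolding is_mle_def by (intro loglik_gauss_upper) auto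
  moreover have "loglik B m p1 q1 (gauss_kernel c s) \<le> loglik B m p2 q2 (gauss_kernel c s)"
    "loglik B m p2 q2 (gauss_kernel c t) \<le> loglik B m p1 q1 (gauss_kernel c t)"
    using mle_t mle_s unfolding is_mle_def by blast+
  ultimately show ?thesis
    using ln_le Phi_eq_loglik_mle[OF mle_t] Phi_eq_loglik_mle[OF mle_s] by linarith
qed

lemma Phi_gauss_close:
  assumes "finite B" "B \<noteq> {}"
    and mle: "\<And>r. 0 < r \<Longrightarrow> \<exists>p q. is_mle B m (gauss_kernel c r) p q"
    and "0 < t" "0 < s" "t^2 \<le> (1 + \<delta>) * s^2" "s^2 \<le> (1 + \<delta>) * t^2"
  shows "\<bar>Phi B m (gauss_kernel c t) - Phi B m (gauss_kernel c s)\<bar> \<le> \<delta>"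
proof -
  have ordered: "\<bar>Phi B m (gauss_kernel c r) - Phi B m (gauss_kernel c r')\<bar> \<le> \<delta>"
    if r: "0 < r" "r \<le> r'" "r'^2 \<le> (1 + \<delta>) * r^2" for r r'
  proof -
    obtain p1 q1 where "is_mle B m (gauss_kernel c r) p1 q1"
      using mle r by blast
    moreover obtain p2 q2 where "is_mle B m (gauss_kernel c r') p2 q2"
      using mle r by force
    ultimately have "\<bar>Phi B m (gauss_kernel c r) - Phi B m (gauss_kernel c r')\<bar> \<le> r'^2 / r^2 - 1"
      using assms r by (intro Phi_gauss_diff_le)
    also have "\<dots> \<le> \<delta>"
      using r by (simp add: field_simps)
    finally show ?thesis .
  qed
  show ?thesis
  proof (cases "t \<le> s")
    case True
    then show ?thesis using ordered assms by blast
  next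
    case False
    then show ?thesis using ordered[of s t] assms by (simp add: abs_minus_commute)
  qed
qed

lemma ln_one_plus_ge_half:
  assumes "0 < a" "a \<le> (1::real)"
  shows "a / 2 \<le> ln (1 + a)"
proof -
  have "- ln (1 + a) = ln (1 / (1 + a))"
    using assms by (simp add: ln_div)
  also have "\<dots> \<le> 1 / (1 + a) - 1"
    using assms by (intro ln_le_minus_one) simp
  also have "\<dots> \<le> - (a / 2)"
    using assms by (simp add: field_simps)
  finally show ?thesis
    by simp
qed

lemma geometric_grid_least_index:
  fixes a R0 R1 :: real
  assumes "0 < a" "a \<le> 1" "0 < R0" "R0 \<le> R1"
  defines "n \<equiv> LEAST i. R1 \<le> R0 * (1 + a) ^ i"
  shows "R1 \<le> R0 * (1 + a) ^ n" and "real n \<le> real_of_int \<lceil>2 / a * ln (R1 / R0)\<rceil>"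
proof -
  define N where "N = nat \<lceil>2 / a * ln (R1 / R0)\<rceil>"
  have "0 \<le> 2 / a * ln (R1 / R0)"
    using assms by simp
  then have N: "real N = real_of_int \<lceil>2 / a * ln (R1 / R0)\<rceil>"
    unfolding N_def by simp
  then have "2 / a * ln (R1 / R0) \<le> real N"
    by (simp add: le_of_int_ceiling)
  then have "ln (R1 / R0) \<le> real N * (a / 2)"
    using assms by (simp add: field_simps)
  also have "\<dots> \<le> real N * ln (1 + a)"
    using assms by (intro mult_left_mono ln_one_plus_ge_half) auto
  also have "\<dots> = ln ((1 + a) ^ N)"
    using assms by (simp add: ln_realpow)
  finally have "R1 / R0 \<le> (1 + a) ^ N"
    using assms by (simp add: ln_le_cancel_iff)
  then have "R1 \<le> R0 * (1 + a) ^ N"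
    using assms by (simp add: field_simps)
  then show "R1 \<le> R0 * (1 + a) ^ n" and "real n \<le> real_of_int \<lceil>2 / a * ln (R1 / R0)\<rceil>"
    unfolding n_def N[symmetric] by (auto intro: LeastI Least_le)
qed

lemma geometric_grid_close:
  fixes a R0 r :: real
  assumes "0 < a" "0 < R0" "R0 \<le> r" "r \<le> R0 * (1 + a) ^ n"
  shows "\<exists>i\<le>n. (R0 * (1 + a) ^ i)^2 \<le> (1 + a) * r^2 \<and> r^2 \<le> (1 + a) * (R0 * (1 + a) ^ i)^2"
  using assms(4)
proof (induction n)
  case 0
  then have "r = R0"
    using assms(3) by simp
  then show ?case
    using assms by auto
next
  case (Suc n)
  define \<rho> where "\<rho> = R0 * (1 + a) ^ n"
  have \<rho>: "0 < \<rho>"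
    using assms by (simp add: \<rho>_def)
  show ?case
  proof (cases "r \<le> \<rho>")
    case True
    then show ?thesis
      using Suc.IH unfolding \<rho>_def by (meson le_SucI)
  next
    case False
    then have "\<rho>^2 \<le> r^2"
      using \<rho> by (simp add: power_mono)
    show ?thesis
    proof (cases "r^2 \<le> (1 + a) * \<rho>^2")
      case True
      have "r^2 \<le> (1 + a) * r^2"
        using assms(1) by (simp add: algebra_simps)
      then show ?thesis
        using True \<open>\<rho>^2 \<le> r^2\<close> unfolding \<rho>_def by (intro exI[of _ n]) auto
    next
      case False
      have "(\<rho> * (1 + a))^2 = (1 + a) * ((1 + a) * \<rho>^2)"
        by (simp add: power2_eq_square)
      also have "\<dots> \<le> (1 + a) * r^2"
        using False assms by (intro mult_left_mono) auto
      finally have "(\<rho> * (1 + a))^2 \<le> (1 + a) * r^2" .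
      moreover have "r^2 \<le> (\<rho> * (1 + a))^2"
        using Suc.prems assms(2,3) by (simp add: \<rho>_def power_mono mult_ac)
      moreover have "(\<rho> * (1 + a))^2 \<le> (1 + a) * (\<rho> * (1 + a))^2"
        using assms(1) by (simp add: algebra_simps)
      ultimately show ?thesis
        unfolding \<rho>_def by (intro exI[of _ "Suc n"]) (auto simp: mult_ac)
    qed
  qed
qed

theorem mainTheorem8:
  fixes B :: "'a::euclidean_space set" and m :: "'a \<Rightarrow> nat" and c :: 'a
    and Rmin Rmax \<epsilon> :: real
  assumes finB: "finite B" and neB: "B \<noteq> {}"
    and m01: "\<forall>x\<in>B. m x \<in> {0, 1}"
    and interior_max: "\<forall>r>0. \<exists>p\<in>{0<..<1}. \<exists>q\<in>{0<..<1}.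
          \<forall>p'\<in>{0<..<1}. \<forall>q'\<in>{0<..<1}.
            loglik B m p' q' (gauss_kernel c r) \<le> loglik B m p q (gauss_kernel c r)"
    and R: "0 < Rmin" "Rmin < Rmax"
    and eps: "0 < \<epsilon>" "\<epsilon> < 1"
  defines "rr \<equiv> (\<lambda>i::nat. Rmin * (1 + exp 1 * \<epsilon> / 4) ^ i)"
  defines "s \<equiv> (LEAST i::nat. rr i \<ge> Rmax)"
  shows "real s \<le> real_of_int \<lceil>8 / (exp 1 * \<epsilon>) * ln (Rmax / Rmin)\<rceil>
       \<and> (\<forall>r\<in>{Rmin..Rmax}. \<exists>i\<le>s.
            \<bar>Phi B m (gauss_kernel c (rr i)) - Phi B m (gauss_kernel c r)\<bar> \<le> \<epsilon>)"
proof -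
  define a where "a = exp 1 * \<epsilon> / 4"
  have "exp 1 * \<epsilon> \<le> 3 * \<epsilon>"
    using exp_le eps by (intro mult_right_mono) auto
  then have a: "0 < a" "a \<le> \<epsilon>"
    using eps by (auto simp: a_def)
  have rr_eq: "rr i = Rmin * (1 + a) ^ i" for i
    unfolding rr_def a_def ..
  have "8 / (exp 1 * \<epsilon>) = 2 / a"
    by (simp add: a_def)
  moreover have "Rmax \<le> rr s" "real s \<le> real_of_int \<lceil>2 / a * ln (Rmax / Rmin)\<rceil>"
    unfolding s_def rr_eq using geometric_grid_least_index[of a Rmin Rmax] a eps R by auto
  ultimately have reach: "Rmax \<le> rr s"
    and count: "real s \<le> real_of_int \<lceil>8 / (exp 1 * \<epsilon>) * ln (Rmax / Rmin)\<rceil>"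
    by simp_all
  have mle: "\<exists>p q. is_mle B m (gauss_kernel c r) p q" if "0 < r" for r
    using interior_max that unfolding is_mle_def by blast
  have "\<exists>i\<le>s. \<bar>Phi B m (gauss_kernel c (rr i)) - Phi B m (gauss_kernel c r)\<bar> \<le> \<epsilon>"
    if r: "r \<in> {Rmin..Rmax}" for r
  proof -
    obtain i where "i \<le> s" "(rr i)^2 \<le> (1 + a) * r^2" "r^2 \<le> (1 + a) * (rr i)^2"
      using geometric_grid_close[of a Rmin r s] a R r reach unfolding rr_eq by auto
    moreover have "0 < rr i"
      using R a by (simp add: rr_eq)
    ultimately have "\<bar>Phi B m (gauss_kernel c (rr i)) - Phi B m (gauss_kernel c r)\<bar> \<le> a"
      using finB neB mle R r by (intro Phi_gauss_close) auto
    then show ?thesis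
      using \<open>i \<le> s\<close> a by auto
  qed
  with count show ?thesis
    by blast
qed

end
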